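(* Let $f:(0,\infty)\to[0,\infty)$ be a convex continuous function with $f(1)=0$ such that for every $x\ne1$, $f$ is twice differentiable at $x$ with $f''(x)\ge0$, and $f'(x)<0$ for $0<x<1$, $f'(x)>0$ for $x>1$. Let $\nu,\mu$ be the Gibbs distributions of two Ising models on the same graph, both $b$-marginally bounded. Then $$D_f(\nu\|\mu)\ \ge\ \max\{f(1-d_{TV}(\nu,\mu)),\,f(1+d_{TV}(\nu,\mu))\}\ \ge\ \max\left\{f\left(1-\tfrac{b^2}{2}d_{\mathrm{par}}(\nu,\mu)\right),\,f\left(1+\tfrac{b^2}{2}d_{\mathrm{par}}(\nu,\mu)\right)\right\}.$$
   Context: An Ising model $(G,J,h)$ on $G=(V,E)$ consists of a symmetric $J\in\mathbb{R}^{V\times V}$ with $J_{uv}\ne0$ only if $\{u,v\}\in E$, and $h\in\mathbb{R}^V$; its Gibbs distribution on $\{-1,+1\}^V$ is $\mu(\sigma)\propto\exp(\tfrac12\sigma^TJ\sigma+h^T\sigma)$. $D_f(\nu\|\mu)=\sum_\sigma\mu(\sigma)f(\nu(\sigma)/\mu(\sigma))$ and $d_{TV}$ is the total variation distance. The parameter distance is $d_{\mathrm{par}}(\nu,\mu)=\max\left\{\max_{u,v}|J^\nu_{uv}-J^\mu_{uv}|,\ \max_{v\in V}\frac{|h^\nu(v)-h^\mu(v)|}{\deg(v)+1}\right\}$. $\mu$ is $b$-marginally bounded if for every $\Lambda\subseteq V$, pinning $\sigma\in\{-1,+1\}^\Lambda$, $v\notin\Lambda$, $c\in\{-1,+1\}$,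 the conditional marginal probability that $v$ takes value $c$ given $\sigma$ on $\Lambda$ is at least $b$. *)

theory Defs
  imports "HOL-Analysis.Analysis"
begin

text \<open>Vertices are the elements of a finite type 'v; the graph is given by a
symmetric irreflexive edge relation E.\<close>

definition simple_graph :: "('v \<Rightarrow> 'v \<Rightarrow> bool) \<Rightarrow> bool" where
  "simple_graph E \<longleftrightarrow> (\<forall>u v. E u v \<longrightarrow> E v u) \<and> (\<forall>v. \<not> E v v)"

definition deg :: "('v \<Rightarrow> 'v \<Rightarrow> bool) \<Rightarrow> 'v \<Rightarrow> nat" where
  "deg E v = card {u. E v u}"

definition ising_model :: "('v \<Rightarrow> 'v \<Rightarrow> bool) \<Rightarrow> ('v \<Rightarrow> 'v \<Rightarrow> real) \<Rightarrow> ('v \<Rightarrow> real) \<Rightarrow> bool" where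
  "ising_model E J h \<longleftrightarrow> simple_graph E \<and> (\<forall>u v. J u v = J v u) \<and> (\<forall>u v. J u v \<noteq> 0 \<longrightarrow> E u v)"

definition spins :: "('v \<Rightarrow> real) set" where
  "spins = {\<sigma>. \<forall>v. \<sigma> v \<in> {-1, 1}}"

definition gibbs_weight :: "('v::finite \<Rightarrow> 'v \<Rightarrow> real) \<Rightarrow> ('v \<Rightarrow> real) \<Rightarrow> ('v \<Rightarrow> real) \<Rightarrow> real" where
  "gibbs_weight J h \<sigma> = exp ((1/2) * (\<Sum>u\<in>UNIV. \<Sum>v\<in>UNIV. \<sigma> u * J u v * \<sigma> v) + (\<Sum>v\<in>UNIV. h v * \<sigma> v))"

definition gibbs :: "('v::finite \<Rightarrow> 'v \<Rightarrow> real) \<Rightarrow> ('v \<Rightarrow> real) \<Rightarrow> ('v \<Rightarrow> real) \<Rightarrow> real" where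
  "gibbs J h \<sigma> = (if \<sigma> \<in> spins then gibbs_weight J h \<sigma> / (\<Sum>\<tau>\<in>spins. gibbs_weight J h \<tau>) else 0)"

definition f_divergence :: "(real \<Rightarrow> real) \<Rightarrow> (('v \<Rightarrow> real) \<Rightarrow> real) \<Rightarrow> (('v \<Rightarrow> real) \<Rightarrow> real) \<Rightarrow> real" where
  "f_divergence f \<nu> \<mu> = (\<Sum>\<sigma>\<in>spins. \<mu> \<sigma> * f (\<nu> \<sigma> / \<mu> \<sigma>))"

definition d_TV :: "(('v \<Rightarrow> real) \<Rightarrow> real) \<Rightarrow> (('v \<Rightarrow> real) \<Rightarrow> real) \<Rightarrow> real" where
  "d_TV \<nu> \<mu> = (1/2) * (\<Sum>\<sigma>\<in>spins. \<bar>\<nu> \<sigma> - \<mu> \<sigma>\<bar>)"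

definition d_par :: "('v::finite \<Rightarrow> 'v \<Rightarrow> bool) \<Rightarrow> ('v \<Rightarrow> 'v \<Rightarrow> real) \<Rightarrow> ('v \<Rightarrow> real)
    \<Rightarrow> ('v \<Rightarrow> 'v \<Rightarrow> real) \<Rightarrow> ('v \<Rightarrow> real) \<Rightarrow> real" where
  "d_par E J1 h1 J2 h2 = max (Max {\<bar>J1 u v - J2 u v\<bar> | u v. True})
                             (Max {\<bar>h1 v - h2 v\<bar> / (real (deg E v) + 1) | v. True})"

definition cond_marginal :: "(('v \<Rightarrow> real) \<Rightarrow> real) \<Rightarrow> 'v set \<Rightarrow> ('v \<Rightarrow> real) \<Rightarrow> 'v \<Rightarrow> real \<Rightarrow> real" where
  "cond_marginal \<mu> \<Lambda> \<tau> v c =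
     (\<Sum>\<sigma>\<in>{\<sigma>\<in>spins. (\<forall>u\<in>\<Lambda>. \<sigma> u = \<tau> u) \<and> \<sigma> v = c}. \<mu> \<sigma>) /
     (\<Sum>\<sigma>\<in>{\<sigma>\<in>spins. \<forall>u\<in>\<Lambda>. \<sigma> u = \<tau> u}. \<mu> \<sigma>)"

definition marginally_bounded :: "real \<Rightarrow> (('v \<Rightarrow> real) \<Rightarrow> real) \<Rightarrow> bool" where
  "marginally_bounded b \<mu> \<longleftrightarrow>
     (\<forall>\<Lambda> \<tau> v c. \<tau> \<in> spins \<longrightarrow> v \<notin> \<Lambda> \<longrightarrow> c \<in> {-1, 1} \<longrightarrow> cond_marginal \<mu> \<Lambda> \<tau> v c \<ge> b)"

end

theory Submission
  imports Defs
begin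

text \<open>The first inequality is Jensen's inequality for the \<open>\<mu>\<close>-averages of \<open>max \<nu> \<mu> / \<mu>\<close> and
  \<open>min \<nu> \<mu> / \<mu>\<close>, which are \<open>1 \<plusminus> d_TV \<nu> \<mu>\<close>; replacing \<open>\<nu> / \<mu>\<close> by \<open>1\<close> can only decrease
  \<open>f\<close>, since \<open>f\<close> is minimal at \<open>1\<close>.

  For the second, compare a configuration \<open>\<sigma>\<close> with its flip at \<open>v\<close>: the log-odds of a Gibbs
  distribution is \<open>2 \<sigma>\<^sub>v\<close> times the local field \<open>h v + \<Sum>\<^sub>u J v u \<sigma>\<^sub>u\<close>. Marginal boundedness
  keeps both probabilities of the pair above \<open>b\<close> times their sum, where the logarithm is
  Lipschitz, so the expected absolute difference of the two local fields is at most
  \<open>2 d_TV / b\<close>. Flipping a further vertex \<open>w\<close> shifts this difference by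
  \<open>\<plusminus>2 (J\<^sub>1 v w - J\<^sub>2 v w)\<close>, which bounds the coupling differences by \<open>d_TV / b\<^sup>2\<close>; the field
  difference at \<open>v\<close> then costs at most \<open>deg v + 1\<close> such terms. Finally, a convex \<open>f\<close> with its
  minimum at \<open>1\<close> is monotone on either side of \<open>1\<close>.\<close>

lemma abs_ln_diff_le:
  fixes b x y :: real
  assumes "0 < b" "b \<le> x" "b \<le> y"
  shows "\<bar>ln x - ln y\<bar> \<le> \<bar>x - y\<bar> / b"
proof -
  have "ln x - ln y \<le> \<bar>x - y\<bar> / b" if "b \<le> x" "b \<le> y" for x y :: real
  proof -
    have "ln x - ln y \<le> (x - y) / y"
      using that \<open>0 < b\<close> by (intro ln_diff_le) auto
    also have "\<dots> \<le> \<bar>x - y\<bar> / y"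
      using that \<open>0 < b\<close> by (intro divide_right_mono) auto
    also have "\<dots> \<le> \<bar>x - y\<bar> / b"
      using that \<open>0 < b\<close> by (intro divide_left_mono) auto
    finally show ?thesis .
  qed
  from this[of x y] this[of y x] show ?thesis
    using assms by (simp add: abs_le_iff abs_minus_commute)
qed

text \<open>\<open>(A + B) (p - p')\<close> for the proportions \<open>p = A / (A + B)\<close>, \<open>p' = A' / (A' + B')\<close> is
  a convex combination of \<open>A - A'\<close> and \<open>B' - B\<close>.\<close>
lemma abs_diff_proportion_le:
  fixes A B A' B' :: real
  assumes "0 < A" "0 < B" "0 < A'" "0 < B'"
  shows "(A + B) * \<bar>A / (A + B) - A' / (A' + B')\<bar> \<le> \<bar>A - A'\<bar> + \<bar>B - B'\<bar>"
proof -
  define \<theta> where "\<theta> = B' / (A' + B')"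
  have \<theta>: "0 \<le> \<theta>" "\<theta> \<le> 1"
    using assms by (simp_all add: \<theta>_def)
  have "A + B \<noteq> 0" "A' + B' \<noteq> 0"
    using assms by auto
  then have "(A + B) * (A / (A + B) - A' / (A' + B')) = \<theta> * (A - A') + (1 - \<theta>) * (B' - B)"
    by (simp add: \<theta>_def divide_simps) (simp add: algebra_simps)
  also have "\<bar>\<dots>\<bar> \<le> \<theta> * \<bar>A - A'\<bar> + (1 - \<theta>) * \<bar>B - B'\<bar>"
    using \<theta> by (auto intro!: order.trans[OF abs_triangle_ineq] simp: abs_mult abs_minus_commute)
  also have "\<dots> \<le> \<theta> * (\<bar>A - A'\<bar> + \<bar>B - B'\<bar>) + (1 - \<theta>) * (\<bar>A - A'\<bar> + \<bar>B - B'\<bar>)"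
    using \<theta> by (intro add_mono mult_left_mono) auto
  also have "\<dots> = \<bar>A - A'\<bar> + \<bar>B - B'\<bar>"
    by (simp add: algebra_simps)
  finally show ?thesis
    using assms by (simp add: abs_mult)
qed

lemma abs_diff_ln_ratio_le:
  fixes A B A' B' b :: real
  assumes pos: "0 < A" "0 < B" "0 < A'" "0 < B'" and "0 < b"
    and bounded: "b * (A + B) \<le> A" "b * (A + B) \<le> B" "b * (A' + B') \<le> A'" "b * (A' + B') \<le> B'"
  shows "b * (A + B) * \<bar>ln (A / B) - ln (A' / B')\<bar> \<le> 2 * (\<bar>A - A'\<bar> + \<bar>B - B'\<bar>)"
proof -
  define p q p' q' where "p = A / (A + B)" "q = B / (A + B)" "p' = A' / (A' + B')" "q' = B' / (A' + B')"
  have bounded': "b \<le> p" "b \<le> q" "b \<le> p'" "b \<le> q'"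
    using pos bounded by (auto simp: p_q_p'_q'_def pos_le_divide_eq)
  have "q - q' = p' - p"
    using pos by (simp add: p_q_p'_q'_def field_simps)
  have "ln (A / B) - ln (A' / B') = (ln p - ln p') - (ln q - ln q')"
    using pos by (simp add: p_q_p'_q'_def ln_div)
  also have "\<bar>\<dots>\<bar> \<le> \<bar>ln p - ln p'\<bar> + \<bar>ln q - ln q'\<bar>"
    by (rule abs_triangle_ineq4)
  also have "\<dots> \<le> \<bar>p - p'\<bar> / b + \<bar>q - q'\<bar> / b"
    using \<open>0 < b\<close> bounded' by (intro add_mono abs_ln_diff_le)
  finally have "\<bar>ln (A / B) - ln (A' / B')\<bar> \<le> \<bar>p - p'\<bar> / b + \<bar>p' - p\<bar> / b"
    using \<open>q - q' = p' - p\<close> by simp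
  then have "b * \<bar>ln (A / B) - ln (A' / B')\<bar> \<le> 2 * \<bar>p - p'\<bar>"
    using \<open>0 < b\<close> by (simp add: abs_minus_commute field_simps)
  then have "b * (A + B) * \<bar>ln (A / B) - ln (A' / B')\<bar> \<le> 2 * ((A + B) * \<bar>p - p'\<bar>)"
    using pos by (simp add: mult_left_mono mult_ac)
  also have "\<dots> \<le> 2 * (\<bar>A - A'\<bar> + \<bar>B - B'\<bar>)"
    using abs_diff_proportion_le[OF pos] by (simp add: p_q_p'_q'_def)
  finally show ?thesis .
qed

lemma convex_on_closed_segment_le:
  fixes f :: "'a::real_vector \<Rightarrow> real"
  assumes "convex_on S f" and "a \<in> S" "x \<in> S" "f a \<le> f x" and "y \<in> closed_segment a x"
  shows "f y \<le> f x"
proof -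
  obtain u where u: "0 \<le> u" "u \<le> 1" "y = (1 - u) *\<^sub>R a + u *\<^sub>R x"
    using assms(5) by (auto simp: closed_segment_def)
  have "f y \<le> (1 - u) * f a + u * f x"
    using convex_onD[OF assms(1) u(1,2) assms(2,3)] u(3) by simp
  also have "\<dots> \<le> (1 - u) * f x + u * f x"
    using assms(4) u by (intro add_right_mono mult_left_mono) auto
  finally show ?thesis
    by (simp add: algebra_simps)
qed

lemma convex_on_max_one_pm_mono:
  fixes f :: "real \<Rightarrow> real"
  assumes "convex_on {0<..} f" and minimum: "\<And>x. 0 < x \<Longrightarrow> f 1 \<le> f x"
    and "0 \<le> t" "t \<le> d" "d < 1"
  shows "max (f (1 - t)) (f (1 + t)) \<le> max (f (1 - d)) (f (1 + d))"
proof -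
  have "1 - t \<in> closed_segment 1 (1 - d)" "1 + t \<in> closed_segment 1 (1 + d)"
    using assms(3,4) by (simp_all add: closed_segment_eq_real_ivl)
  then have "f (1 - t) \<le> f (1 - d)" "f (1 + t) \<le> f (1 + d)"
    using assms(3-5) minimum[of "1 - d"] minimum[of "1 + d"]
      convex_on_closed_segment_le[OF assms(1), where a = 1 and x = "1 - d" and y = "1 - t"]
      convex_on_closed_segment_le[OF assms(1), where a = 1 and x = "1 + d" and y = "1 + t"]
    by simp_all
  then show ?thesis
    by linarith
qed

lemma finite_set_of_pairs:
  fixes g :: "'a::finite \<Rightarrow> 'b::finite \<Rightarrow> 'c"
  shows "finite {g u v | u v. True}"
  using finite_image_set2[of "\<lambda>_. True" "\<lambda>_. True" g] by simp

definition spin_flip :: "'v \<Rightarrow> ('v \<Rightarrow> real) \<Rightarrow> 'v \<Rightarrow> real" where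
  "spin_flip v \<sigma> = \<sigma>(v := - \<sigma> v)"

lemma finite_spins: "finite (spins :: ('v::finite \<Rightarrow> real) set)"
proof -
  have "spins = PiE UNIV (\<lambda>_::'v. {-1, 1::real})"
    by (auto simp: spins_def PiE_UNIV_domain Pi_def)
  then show ?thesis using finite_PiE[of UNIV "\<lambda>_::'v. {-1, 1::real}"] by simp
qed

lemma const_one_in_spins: "(\<lambda>_. 1) \<in> spins"
  by (simp add: spins_def)

lemma spin_cases: "\<sigma> \<in> spins \<Longrightarrow> \<sigma> v = -1 \<or> \<sigma> v = 1"
  by (simp add: spins_def)

lemma abs_spin: "\<sigma> \<in> spins \<Longrightarrow> \<bar>\<sigma> v\<bar> = 1"
  using spin_cases[of \<sigma> v] by auto

lemma spin_flip_in_spins: "\<sigma> \<in> spins \<Longrightarrow> spin_flip v \<sigma> \<in> spins"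
  by (auto simp: spins_def spin_flip_def)

lemma spin_flip_spin_flip [simp]: "spin_flip v (spin_flip v \<sigma>) = \<sigma>"
  by (auto simp: spin_flip_def)

lemma sum_spins_spin_flip: "(\<Sum>\<sigma>\<in>spins. g (spin_flip v \<sigma>)) = (\<Sum>\<sigma>\<in>spins. g \<sigma>)"
  by (rule sum.reindex_bij_witness[where i = "spin_flip v" and j = "spin_flip v"])
     (auto simp: spin_flip_in_spins)

lemma sum_mult_spin_flip:
  "(\<Sum>u\<in>UNIV. c u * spin_flip w \<sigma> u) = (\<Sum>u\<in>UNIV. c u * \<sigma> u) - 2 * c w * \<sigma> (w::'v::finite)"
proof -
  have "c u * spin_flip w \<sigma> u = c u * \<sigma> u - (if u = w then 2 * c w * \<sigma> w else 0)" for u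
    by (auto simp: spin_flip_def)
  then show ?thesis by (simp add: sum_subtractf)
qed

lemma d_TV_less_one:
  fixes \<nu> \<mu> :: "('v::finite \<Rightarrow> real) \<Rightarrow> real"
  assumes \<nu>: "\<And>\<sigma>. \<sigma> \<in> spins \<Longrightarrow> 0 < \<nu> \<sigma>" "(\<Sum>\<sigma>\<in>spins. \<nu> \<sigma>) = 1"
    and \<mu>: "\<And>\<sigma>. \<sigma> \<in> spins \<Longrightarrow> 0 < \<mu> \<sigma>" "(\<Sum>\<sigma>\<in>spins. \<mu> \<sigma>) = 1"
  shows "d_TV \<nu> \<mu> < 1"
proof -
  have "\<bar>\<nu> \<sigma> - \<mu> \<sigma>\<bar> < \<nu> \<sigma> + \<mu> \<sigma>" if "\<sigma> \<in> spins" for \<sigma>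
    using \<nu>(1)[OF that] \<mu>(1)[OF that] by (simp add: abs_if)
  then have "(\<Sum>\<sigma>\<in>spins. \<bar>\<nu> \<sigma> - \<mu> \<sigma>\<bar>) < (\<Sum>\<sigma>\<in>spins. \<nu> \<sigma> + \<mu> \<sigma>)"
    using const_one_in_spins by (intro sum_strict_mono_ex1 finite_spins) (auto intro: less_imp_le)
  then show ?thesis
    using \<nu>(2) \<mu>(2) by (simp add: d_TV_def sum.distrib)
qed

lemma f_divergence_ge_f_one_pm_d_TV:
  fixes f :: "real \<Rightarrow> real" and \<nu> \<mu> :: "('v::finite \<Rightarrow> real) \<Rightarrow> real"
  assumes conv: "convex_on {0<..} f" and f_nonneg: "\<And>x. 0 < x \<Longrightarrow> 0 \<le> f x" and "f 1 = 0"
    and \<nu>: "\<And>\<sigma>. \<sigma> \<in> spins \<Longrightarrow> 0 < \<nu> \<sigma>" "(\<Sum>\<sigma>\<in>spins. \<nu> \<sigma>) = 1"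
    and \<mu>: "\<And>\<sigma>. \<sigma> \<in> spins \<Longrightarrow> 0 < \<mu> \<sigma>" "(\<Sum>\<sigma>\<in>spins. \<mu> \<sigma>) = 1"
  shows "max (f (1 - d_TV \<nu> \<mu>)) (f (1 + d_TV \<nu> \<mu>)) \<le> f_divergence f \<nu> \<mu>"
proof -
  have jensen: "f (\<Sum>\<sigma>\<in>spins. g \<sigma>) \<le> f_divergence f \<nu> \<mu>"
    if g: "\<And>\<sigma>. \<sigma> \<in> spins \<Longrightarrow> g \<sigma> = \<nu> \<sigma> \<or> g \<sigma> = \<mu> \<sigma>" for g
  proof -
    have "(\<Sum>\<sigma>\<in>spins. g \<sigma>) = (\<Sum>\<sigma>\<in>spins. \<mu> \<sigma> *\<^sub>R (g \<sigma> / \<mu> \<sigma>))"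
      using \<mu>(1) by (intro sum.cong) (auto simp: less_imp_neq[symmetric])
    also have "f \<dots> \<le> (\<Sum>\<sigma>\<in>spins. \<mu> \<sigma> * f (g \<sigma> / \<mu> \<sigma>))"
    proof (rule convex_on_sum[OF finite_spins _ conv \<mu>(2)])
      show "spins \<noteq> {}"
        using const_one_in_spins by blast
      show "0 \<le> \<mu> \<sigma>" "g \<sigma> / \<mu> \<sigma> \<in> {0<..}" if "\<sigma> \<in> spins" for \<sigma>
        using g[OF that] \<nu>(1)[OF that] \<mu>(1)[OF that] by auto
    qed
    also have "\<dots> \<le> f_divergence f \<nu> \<mu>"
      unfolding f_divergence_def
    proof (intro sum_mono mult_left_mono)
      fix \<sigma> :: "'v \<Rightarrow> real" assume \<sigma>: "\<sigma> \<in> spins"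
      then show "0 \<le> \<mu> \<sigma>"
        using \<mu>(1) less_imp_le by blast
      have "0 \<le> f (\<nu> \<sigma> / \<mu> \<sigma>)"
        using \<nu>(1)[OF \<sigma>] \<mu>(1)[OF \<sigma>] by (intro f_nonneg) simp
      then show "f (g \<sigma> / \<mu> \<sigma>) \<le> f (\<nu> \<sigma> / \<mu> \<sigma>)"
        using g[OF \<sigma>] \<mu>(1)[OF \<sigma>] \<open>f 1 = 0\<close> by auto
    qed
    finally show ?thesis .
  qed
  have min_eq: "min (\<nu> \<sigma>) (\<mu> \<sigma>) = (\<nu> \<sigma> + \<mu> \<sigma> - \<bar>\<nu> \<sigma> - \<mu> \<sigma>\<bar>) / 2"
    and max_eq: "max (\<nu> \<sigma>) (\<mu> \<sigma>) = (\<nu> \<sigma> + \<mu> \<sigma> + \<bar>\<nu> \<sigma> - \<mu> \<sigma>\<bar>) / 2" for \<sigma>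
    by (simp_all add: min_def max_def)
  have "(\<Sum>\<sigma>\<in>spins. min (\<nu> \<sigma>) (\<mu> \<sigma>)) = 1 - d_TV \<nu> \<mu>"
    and "(\<Sum>\<sigma>\<in>spins. max (\<nu> \<sigma>) (\<mu> \<sigma>)) = 1 + d_TV \<nu> \<mu>"
    unfolding min_eq max_eq using \<nu>(2) \<mu>(2)
    by (simp_all add: d_TV_def sum.distrib sum_subtractf flip: sum_divide_distrib)
  moreover have "min a c = a \<or> min a c = c" "max a c = a \<or> max a c = c" for a c :: real
    by linarith+
  ultimately show ?thesis
    using jensen[of "\<lambda>\<sigma>. min (\<nu> \<sigma>) (\<mu> \<sigma>)"] jensen[of "\<lambda>\<sigma>. max (\<nu> \<sigma>) (\<mu> \<sigma>)"] by simp
qed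

lemma spins_agreeing_off:
  assumes "\<sigma> \<in> spins"
  shows "{\<rho>\<in>spins. \<forall>u\<in>-{v}. \<rho> u = \<sigma> u} = {\<sigma>, spin_flip v \<sigma>}"
proof (intro equalityI subsetI)
  fix \<rho> assume \<rho>: "\<rho> \<in> {\<rho>\<in>spins. \<forall>u\<in>-{v}. \<rho> u = \<sigma> u}"
  then have "\<rho> v = \<sigma> v \<or> \<rho> v = - \<sigma> v"
    using spin_cases[of \<rho> v] spin_cases[OF assms, of v] by auto
  then show "\<rho> \<in> {\<sigma>, spin_flip v \<sigma>}"
    using \<rho> by (auto simp: spin_flip_def fun_eq_iff)
qed (use assms spin_flip_in_spins in \<open>auto simp: spin_flip_def split: if_splits\<close>)

lemma marginally_bounded_spin_flip:
  assumes mb: "marginally_bounded b \<mu>" and pos: "\<And>\<rho>. \<rho> \<in> spins \<Longrightarrow> 0 < \<mu> \<rho>"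
    and \<sigma>: "\<sigma> \<in> spins"
  shows "b * (\<mu> \<sigma> + \<mu> (spin_flip v \<sigma>)) \<le> \<mu> \<sigma>"
proof -
  have flip_neq: "spin_flip v \<sigma> \<noteq> \<sigma>"
    using abs_spin[OF \<sigma>, of v] by (auto simp: spin_flip_def fun_eq_iff)
  have "{\<rho>\<in>spins. (\<forall>u\<in>-{v}. \<rho> u = \<sigma> u) \<and> \<rho> v = \<sigma> v}
      = {\<rho>\<in>{\<sigma>, spin_flip v \<sigma>}. \<rho> v = \<sigma> v}"
    using spins_agreeing_off[OF \<sigma>, of v] by blast
  also have "\<dots> = {\<sigma>}"
    using abs_spin[OF \<sigma>, of v] by (auto simp: spin_flip_def)
  finally have "cond_marginal \<mu> (-{v}) \<sigma> v (\<sigma> v) = \<mu> \<sigma> / (\<mu> \<sigma> + \<mu> (spin_flip v \<sigma>))"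
    using flip_neq by (simp add: cond_marginal_def spins_agreeing_off[OF \<sigma>])
  moreover have "b \<le> cond_marginal \<mu> (-{v}) \<sigma> v (\<sigma> v)"
    using mb \<sigma> spin_cases[OF \<sigma>, of v] by (auto simp: marginally_bounded_def)
  moreover have "0 < \<mu> \<sigma> + \<mu> (spin_flip v \<sigma>)"
    using pos[OF \<sigma>] pos[OF spin_flip_in_spins[OF \<sigma>, of v]] by simp
  ultimately show ?thesis by (simp add: pos_le_divide_eq)
qed

lemma marginally_bounded_le_half:
  assumes mb: "marginally_bounded b \<mu>" and pos: "\<And>\<rho>. \<rho> \<in> spins \<Longrightarrow> 0 < \<mu> \<rho>"
  shows "b \<le> 1/2"
proof -
  define \<sigma> :: "'a \<Rightarrow> real" where "\<sigma> = (\<lambda>_. 1)"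
  define v :: 'a where "v = undefined"
  have \<sigma>: "\<sigma> \<in> spins" "spin_flip v \<sigma> \<in> spins"
    by (simp_all add: \<sigma>_def const_one_in_spins spin_flip_in_spins)
  have "2 * b * (\<mu> \<sigma> + \<mu> (spin_flip v \<sigma>)) \<le> 1 * (\<mu> \<sigma> + \<mu> (spin_flip v \<sigma>))"
    using marginally_bounded_spin_flip[OF mb pos \<sigma>(1), of v]
      marginally_bounded_spin_flip[OF mb pos \<sigma>(2), of v] by (simp add: add.commute)
  then show ?thesis
    using pos[OF \<sigma>(1)] pos[OF \<sigma>(2)] by (simp add: mult_le_cancel_right_pos)
qed

text \<open>Pair each \<open>\<sigma>\<close> with its flip at \<open>w\<close>: by marginal boundedness both carry at least a
  \<open>b\<close>-fraction of the pair's mass, and \<open>\<bar>G\<bar>\<close> sums to at least \<open>2 \<bar>c\<bar>\<close> over the pair.\<close>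
lemma flip_increment_le_sum_abs:
  fixes \<mu> :: "('v::finite \<Rightarrow> real) \<Rightarrow> real"
  assumes mb: "marginally_bounded b \<mu>" and pos: "\<And>\<sigma>. \<sigma> \<in> spins \<Longrightarrow> 0 < \<mu> \<sigma>"
    and sum_one: "(\<Sum>\<sigma>\<in>spins. \<mu> \<sigma>) = 1" and "0 \<le> b"
    and G: "\<And>\<sigma>. G (spin_flip w \<sigma>) = G \<sigma> - 2 * c * \<sigma> w"
  shows "2 * b * \<bar>c\<bar> \<le> (\<Sum>\<sigma>\<in>spins. \<mu> \<sigma> * \<bar>G \<sigma>\<bar>)"
proof -
  define \<sigma>' where "\<sigma>' \<sigma> = spin_flip w \<sigma>" for \<sigma> :: "'v \<Rightarrow> real"
  have pair: "b * (\<mu> \<sigma> + \<mu> (\<sigma>' \<sigma>)) * (2 * \<bar>c\<bar>) \<le> \<mu> \<sigma> * \<bar>G \<sigma>\<bar> + \<mu> (\<sigma>' \<sigma>) * \<bar>G (\<sigma>' \<sigma>)\<bar>"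
    if \<sigma>: "\<sigma> \<in> spins" for \<sigma>
  proof -
    have \<sigma>': "\<sigma>' \<sigma> \<in> spins"
      using \<sigma> by (simp add: \<sigma>'_def spin_flip_in_spins)
    have "2 * \<bar>c\<bar> = \<bar>G \<sigma> - G (\<sigma>' \<sigma>)\<bar>"
      using abs_spin[OF \<sigma>, of w] by (simp add: \<sigma>'_def G abs_mult)
    also have "\<dots> \<le> \<bar>G \<sigma>\<bar> + \<bar>G (\<sigma>' \<sigma>)\<bar>"
      by (rule abs_triangle_ineq4)
    finally have "b * (\<mu> \<sigma> + \<mu> (\<sigma>' \<sigma>)) * (2 * \<bar>c\<bar>)
        \<le> b * (\<mu> \<sigma> + \<mu> (\<sigma>' \<sigma>)) * \<bar>G \<sigma>\<bar> + b * (\<mu> \<sigma> + \<mu> (\<sigma>' \<sigma>)) * \<bar>G (\<sigma>' \<sigma>)\<bar>"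
      using \<open>0 \<le> b\<close> pos[OF \<sigma>] pos[OF \<sigma>'] by (simp add: distrib_left[symmetric] mult_left_mono)
    also have "\<dots> \<le> \<mu> \<sigma> * \<bar>G \<sigma>\<bar> + \<mu> (\<sigma>' \<sigma>) * \<bar>G (\<sigma>' \<sigma>)\<bar>"
      using marginally_bounded_spin_flip[OF mb pos \<sigma>, of w]
        marginally_bounded_spin_flip[OF mb pos \<sigma>', of w]
      by (intro add_mono mult_right_mono) (auto simp: \<sigma>'_def add.commute)
    finally show ?thesis .
  qed
  have "4 * b * \<bar>c\<bar> = (\<Sum>\<sigma>\<in>spins. b * (\<mu> \<sigma> + \<mu> (\<sigma>' \<sigma>)) * (2 * \<bar>c\<bar>))"
    using sum_spins_spin_flip[of \<mu> w]
    by (simp add: \<sigma>'_def sum_one sum.distrib flip: sum_distrib_left sum_distrib_right)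
  also have "\<dots> \<le> (\<Sum>\<sigma>\<in>spins. \<mu> \<sigma> * \<bar>G \<sigma>\<bar> + \<mu> (\<sigma>' \<sigma>) * \<bar>G (\<sigma>' \<sigma>)\<bar>)"
    using pair by (rule sum_mono)
  also have "\<dots> = 2 * (\<Sum>\<sigma>\<in>spins. \<mu> \<sigma> * \<bar>G \<sigma>\<bar>)"
    using sum_spins_spin_flip[of "\<lambda>\<sigma>. \<mu> \<sigma> * \<bar>G \<sigma>\<bar>" w] by (simp add: \<sigma>'_def sum.distrib)
  finally show ?thesis
    by simp
qed

lemma gibbs_weight_pos: "0 < gibbs_weight J h \<sigma>"
  by (simp add: gibbs_weight_def)

lemma partition_function_pos:
  fixes J :: "'v::finite \<Rightarrow> 'v \<Rightarrow> real"
  shows "0 < (\<Sum>\<tau>\<in>spins. gibbs_weight J h \<tau>)"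
  using const_one_in_spins by (intro sum_pos) (auto simp: finite_spins gibbs_weight_pos)

lemma gibbs_pos: "\<sigma> \<in> spins \<Longrightarrow> 0 < gibbs J h \<sigma>"
  by (simp add: gibbs_def gibbs_weight_pos partition_function_pos)

lemma sum_gibbs: "(\<Sum>\<sigma>\<in>spins. gibbs J h \<sigma>) = 1"
  using partition_function_pos[of J h] by (simp add: gibbs_def sum_divide_distrib[symmetric])

lemma ising_model_coupling_sym: "ising_model E J h \<Longrightarrow> J u w = J w u"
  by (simp add: ising_model_def)

lemma ising_model_coupling_non_edge: "ising_model E J h \<Longrightarrow> \<not> E u w \<Longrightarrow> J u w = 0"
  unfolding ising_model_def by blast

lemma ising_model_no_self_coupling: "ising_model E J h \<Longrightarrow> J v v = 0"
  unfolding ising_model_def simple_graph_def by blast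

lemma quadratic_form_spin_flip:
  fixes J :: "'v::finite \<Rightarrow> 'v \<Rightarrow> real"
  assumes sym: "\<And>u w. J u w = J w u" and "J v v = 0"
  shows "(\<Sum>u\<in>UNIV. \<Sum>w\<in>UNIV. spin_flip v \<sigma> u * J u w * spin_flip v \<sigma> w)
       = (\<Sum>u\<in>UNIV. \<Sum>w\<in>UNIV. \<sigma> u * J u w * \<sigma> w) - 4 * \<sigma> v * (\<Sum>u\<in>UNIV. J v u * \<sigma> u)"
proof -
  have "spin_flip v \<sigma> u * J u w * spin_flip v \<sigma> w = \<sigma> u * J u w * \<sigma> w
      - (if u = v then 2 * \<sigma> v * J v w * \<sigma> w else 0)
      - (if w = v then 2 * \<sigma> v * J v u * \<sigma> u else 0)" for u w
    using assms by (auto simp: spin_flip_def algebra_simps)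
  moreover have "(\<Sum>u\<in>UNIV. \<Sum>w\<in>UNIV. if u = v then g w else 0) = (\<Sum>w\<in>UNIV. g w)"
    for g :: "'v \<Rightarrow> real"
    by (subst sum.swap) simp
  ultimately show ?thesis
    by (simp add: sum_subtractf sum_negf sum_distrib_left sym[of _ v] mult_ac)
qed

definition local_field :: "('v::finite \<Rightarrow> 'v \<Rightarrow> real) \<Rightarrow> ('v \<Rightarrow> real) \<Rightarrow> 'v \<Rightarrow> ('v \<Rightarrow> real) \<Rightarrow> real" where
  "local_field J h v \<sigma> = h v + (\<Sum>u\<in>UNIV. J v u * \<sigma> u)"

lemma local_field_spin_flip:
  "local_field J h v (spin_flip w \<sigma>) = local_field J h v \<sigma> - 2 * J v w * \<sigma> w"
  by (simp add: local_field_def sum_mult_spin_flip)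

lemma ln_gibbs_spin_flip_ratio:
  assumes J: "ising_model E J h" and \<sigma>: "\<sigma> \<in> spins"
  shows "ln (gibbs J h \<sigma> / gibbs J h (spin_flip v \<sigma>)) = 2 * \<sigma> v * local_field J h v \<sigma>"
proof -
  have "gibbs J h \<sigma> / gibbs J h (spin_flip v \<sigma>)
      = gibbs_weight J h \<sigma> / gibbs_weight J h (spin_flip v \<sigma>)"
    using \<sigma> spin_flip_in_spins[OF \<sigma>, of v] partition_function_pos[of J h]
    by (simp add: gibbs_def)
  also have "\<dots> = exp (2 * \<sigma> v * local_field J h v \<sigma>)"
    unfolding gibbs_weight_def exp_diff[symmetric]
      quadratic_form_spin_flip[OF ising_model_coupling_sym[OF J] ising_model_no_self_coupling[OF J]]
    by (simp add: sum_mult_spin_flip local_field_def algebra_simps)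
  finally show ?thesis by simp
qed

lemma sum_gibbs_abs_local_field_diff_le:
  assumes J1: "ising_model E1 J1 h1" and J2: "ising_model E2 J2 h2" and "0 < b"
    and mb1: "marginally_bounded b (gibbs J1 h1)" and mb2: "marginally_bounded b (gibbs J2 h2)"
  shows "b * (\<Sum>\<sigma>\<in>spins. gibbs J1 h1 \<sigma> * \<bar>local_field J1 h1 v \<sigma> - local_field J2 h2 v \<sigma>\<bar>)
    \<le> 2 * d_TV (gibbs J1 h1) (gibbs J2 h2)"
proof -
  define \<nu> where "\<nu> = gibbs J1 h1"
  define \<mu> where "\<mu> = gibbs J2 h2"
  define G where "G \<sigma> = local_field J1 h1 v \<sigma> - local_field J2 h2 v \<sigma>" for \<sigma>
  define \<sigma>' where "\<sigma>' \<sigma> = spin_flip v \<sigma>" for \<sigma> :: "'a \<Rightarrow> real"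
  have G_flip: "G (\<sigma>' \<sigma>) = G \<sigma>" for \<sigma>
    using ising_model_no_self_coupling[OF J1, of v] ising_model_no_self_coupling[OF J2, of v]
    by (simp add: G_def \<sigma>'_def local_field_spin_flip)
  have pair: "b * (\<nu> \<sigma> + \<nu> (\<sigma>' \<sigma>)) * \<bar>G \<sigma>\<bar> \<le> \<bar>\<nu> \<sigma> - \<mu> \<sigma>\<bar> + \<bar>\<nu> (\<sigma>' \<sigma>) - \<mu> (\<sigma>' \<sigma>)\<bar>"
    if \<sigma>: "\<sigma> \<in> spins" for \<sigma>
  proof -
    have \<sigma>': "\<sigma>' \<sigma> \<in> spins"
      using \<sigma> by (simp add: \<sigma>'_def spin_flip_in_spins)
    have "ln (\<nu> \<sigma> / \<nu> (\<sigma>' \<sigma>)) - ln (\<mu> \<sigma> / \<mu> (\<sigma>' \<sigma>)) = 2 * \<sigma> v * G \<sigma>"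
      using ln_gibbs_spin_flip_ratio[OF J1 \<sigma>] ln_gibbs_spin_flip_ratio[OF J2 \<sigma>]
      by (simp add: \<nu>_def \<mu>_def \<sigma>'_def G_def algebra_simps)
    then have "\<bar>ln (\<nu> \<sigma> / \<nu> (\<sigma>' \<sigma>)) - ln (\<mu> \<sigma> / \<mu> (\<sigma>' \<sigma>))\<bar> = 2 * \<bar>G \<sigma>\<bar>"
      using abs_spin[OF \<sigma>, of v] by (simp add: abs_mult)
    moreover have "b * (\<nu> \<sigma> + \<nu> (\<sigma>' \<sigma>)) * \<bar>ln (\<nu> \<sigma> / \<nu> (\<sigma>' \<sigma>)) - ln (\<mu> \<sigma> / \<mu> (\<sigma>' \<sigma>))\<bar>
        \<le> 2 * (\<bar>\<nu> \<sigma> - \<mu> \<sigma>\<bar> + \<bar>\<nu> (\<sigma>' \<sigma>) - \<mu> (\<sigma>' \<sigma>)\<bar>)"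
      using \<open>0 < b\<close> gibbs_pos[OF \<sigma>] gibbs_pos[OF \<sigma>']
        marginally_bounded_spin_flip[OF mb1 gibbs_pos \<sigma>, of v]
        marginally_bounded_spin_flip[OF mb2 gibbs_pos \<sigma>, of v]
        marginally_bounded_spin_flip[OF mb1 gibbs_pos \<sigma>', of v]
        marginally_bounded_spin_flip[OF mb2 gibbs_pos \<sigma>', of v]
      by (intro abs_diff_ln_ratio_le) (auto simp: \<nu>_def \<mu>_def \<sigma>'_def add.commute)
    ultimately show ?thesis
      by simp
  qed
  have "2 * (b * (\<Sum>\<sigma>\<in>spins. \<nu> \<sigma> * \<bar>G \<sigma>\<bar>)) = b * (\<Sum>\<sigma>\<in>spins. (\<nu> \<sigma> + \<nu> (\<sigma>' \<sigma>)) * \<bar>G \<sigma>\<bar>)"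
    using sum_spins_spin_flip[of "\<lambda>\<sigma>. \<nu> \<sigma> * \<bar>G \<sigma>\<bar>" v]
    by (simp add: \<sigma>'_def G_flip[unfolded \<sigma>'_def] distrib_right sum.distrib)
  also have "\<dots> \<le> (\<Sum>\<sigma>\<in>spins. \<bar>\<nu> \<sigma> - \<mu> \<sigma>\<bar> + \<bar>\<nu> (\<sigma>' \<sigma>) - \<mu> (\<sigma>' \<sigma>)\<bar>)"
    unfolding sum_distrib_left using pair by (intro sum_mono) (simp add: mult.assoc)
  also have "\<dots> = 2 * (2 * d_TV \<nu> \<mu>)"
    using sum_spins_spin_flip[of "\<lambda>\<sigma>. \<bar>\<nu> \<sigma> - \<mu> \<sigma>\<bar>" v]
    by (simp add: \<sigma>'_def sum.distrib d_TV_def)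
  finally show ?thesis
    by (simp add: \<nu>_def \<mu>_def G_def)
qed

lemma abs_coupling_diff_le:
  assumes J1: "ising_model E1 J1 h1" and J2: "ising_model E2 J2 h2" and "0 < b"
    and mb1: "marginally_bounded b (gibbs J1 h1)" and mb2: "marginally_bounded b (gibbs J2 h2)"
  shows "\<bar>J1 v w - J2 v w\<bar> \<le> d_TV (gibbs J1 h1) (gibbs J2 h2) / b\<^sup>2"
proof -
  have "b * (2 * b * \<bar>J1 v w - J2 v w\<bar>)
      \<le> b * (\<Sum>\<sigma>\<in>spins. gibbs J1 h1 \<sigma> * \<bar>local_field J1 h1 v \<sigma> - local_field J2 h2 v \<sigma>\<bar>)"
    using \<open>0 < b\<close>
    by (intro mult_left_mono flip_increment_le_sum_abs[OF mb1 gibbs_pos sum_gibbs])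
       (auto simp: local_field_spin_flip algebra_simps)
  also have "\<dots> \<le> 2 * d_TV (gibbs J1 h1) (gibbs J2 h2)"
    by (rule sum_gibbs_abs_local_field_diff_le[OF J1 J2 \<open>0 < b\<close> mb1 mb2])
  finally show ?thesis
    using \<open>0 < b\<close> by (simp add: pos_le_divide_eq power2_eq_square mult_ac)
qed

text \<open>Only the neighbours of \<open>v\<close> contribute to the local field besides \<open>h v\<close>, and \<open>b \<le> 1/2\<close>
  absorbs the factor \<open>2 / b\<close> of the local field bound into \<open>1 / b\<^sup>2\<close>.\<close>
lemma abs_field_diff_le:
  assumes J1: "ising_model E J1 h1" and J2: "ising_model E J2 h2" and "0 < b"
    and mb1: "marginally_bounded b (gibbs J1 h1)" and mb2: "marginally_bounded b (gibbs J2 h2)"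
  shows "\<bar>h1 v - h2 v\<bar> / (real (deg E v) + 1) \<le> d_TV (gibbs J1 h1) (gibbs J2 h2) / b\<^sup>2"
proof -
  define T where "T = d_TV (gibbs J1 h1) (gibbs J2 h2) / b\<^sup>2"
  define G where "G \<sigma> = local_field J1 h1 v \<sigma> - local_field J2 h2 v \<sigma>" for \<sigma>
  define S where "S = (\<Sum>u\<in>UNIV. \<bar>J1 v u - J2 v u\<bar>)"
  have "0 \<le> T"
    by (simp add: T_def d_TV_def sum_nonneg)
  have pointwise: "\<bar>h1 v - h2 v\<bar> \<le> \<bar>G \<sigma>\<bar> + S" if "\<sigma> \<in> spins" for \<sigma>
  proof -
    have "\<bar>h1 v - h2 v\<bar> = \<bar>G \<sigma> - (\<Sum>u\<in>UNIV. (J1 v u - J2 v u) * \<sigma> u)\<bar>"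
      by (simp add: G_def local_field_def left_diff_distrib sum_subtractf)
    also have "\<dots> \<le> \<bar>G \<sigma>\<bar> + \<bar>\<Sum>u\<in>UNIV. (J1 v u - J2 v u) * \<sigma> u\<bar>"
      by (rule abs_triangle_ineq4)
    also have "\<bar>\<Sum>u\<in>UNIV. (J1 v u - J2 v u) * \<sigma> u\<bar> \<le> S"
      using sum_abs[of "\<lambda>u. (J1 v u - J2 v u) * \<sigma> u" UNIV] abs_spin[OF that]
      by (simp add: S_def abs_mult)
    finally show ?thesis
      by simp
  qed
  have "\<bar>h1 v - h2 v\<bar> = (\<Sum>\<sigma>\<in>spins. gibbs J1 h1 \<sigma> * \<bar>h1 v - h2 v\<bar>)"
    by (simp add: sum_gibbs flip: sum_distrib_right)
  also have "\<dots> \<le> (\<Sum>\<sigma>\<in>spins. gibbs J1 h1 \<sigma> * (\<bar>G \<sigma>\<bar> + S))"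
    using pointwise by (intro sum_mono mult_left_mono) (auto simp: gibbs_pos less_imp_le)
  also have "\<dots> = (\<Sum>\<sigma>\<in>spins. gibbs J1 h1 \<sigma> * \<bar>G \<sigma>\<bar>) + S"
    by (simp add: distrib_left sum.distrib sum_gibbs flip: sum_distrib_right)
  also have "(\<Sum>\<sigma>\<in>spins. gibbs J1 h1 \<sigma> * \<bar>G \<sigma>\<bar>) \<le> T"
  proof -
    have "b * (\<Sum>\<sigma>\<in>spins. gibbs J1 h1 \<sigma> * \<bar>G \<sigma>\<bar>) \<le> b * ((2 * b) * T)"
      using sum_gibbs_abs_local_field_diff_le[OF J1 J2 \<open>0 < b\<close> mb1 mb2, of v] \<open>0 < b\<close>
      by (simp add: G_def T_def power2_eq_square)
    also have "\<dots> \<le> b * T"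
      using marginally_bounded_le_half[OF mb1 gibbs_pos] \<open>0 < b\<close> \<open>0 \<le> T\<close>
      by (intro mult_left_mono mult_left_le_one_le) auto
    finally show ?thesis
      using \<open>0 < b\<close> by simp
  qed
  also have "S = (\<Sum>u\<in>{u. E v u}. \<bar>J1 v u - J2 v u\<bar>)"
    unfolding S_def using ising_model_coupling_non_edge[OF J1] ising_model_coupling_non_edge[OF J2]
    by (intro sum.mono_neutral_right) auto
  also have "\<dots> \<le> real (card {u. E v u}) * T"
    using abs_coupling_diff_le[OF J1 J2 \<open>0 < b\<close> mb1 mb2] by (intro sum_bounded_above) (simp add: T_def)
  finally have "\<bar>h1 v - h2 v\<bar> \<le> (real (deg E v) + 1) * T"
    by (simp add: deg_def algebra_simps)
  then show ?thesis
    by (simp add: T_def pos_divide_le_eq mult.commute)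
qed

lemma d_par_nonneg: "0 \<le> d_par E J1 h1 J2 h2"
proof -
  have "\<bar>J1 u v - J2 u v\<bar> \<le> Max {\<bar>J1 u v - J2 u v\<bar> | u v. True}" for u v
    using finite_set_of_pairs by (intro Max_ge) auto
  then show ?thesis
    unfolding d_par_def by (meson abs_ge_zero max.coboundedI1 order.trans)
qed

lemma d_par_le:
  assumes J1: "ising_model E J1 h1" and J2: "ising_model E J2 h2" and "0 < b"
    and mb1: "marginally_bounded b (gibbs J1 h1)" and mb2: "marginally_bounded b (gibbs J2 h2)"
  shows "d_par E J1 h1 J2 h2 \<le> d_TV (gibbs J1 h1) (gibbs J2 h2) / b\<^sup>2"
proof -
  let ?J = "{\<bar>J1 u v - J2 u v\<bar> | u v. True}"
  let ?h = "{\<bar>h1 v - h2 v\<bar> / (real (deg E v) + 1) | v. True}"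
  have "finite ?J" "finite ?h"
    using finite_set_of_pairs
      finite_image_set[of "\<lambda>_. True" "\<lambda>v. \<bar>h1 v - h2 v\<bar> / (real (deg E v) + 1)"]
    by simp_all
  moreover have "?J \<noteq> {}" "?h \<noteq> {}"
    by blast+
  ultimately show ?thesis
    unfolding d_par_def
    using abs_coupling_diff_le[OF J1 J2 \<open>0 < b\<close> mb1 mb2] abs_field_diff_le[OF J1 J2 \<open>0 < b\<close> mb1 mb2]
    by (auto intro!: max.boundedI Max.boundedI)
qed

theorem lemma3p3:
  fixes f :: "real \<Rightarrow> real"
    and E :: "'v::finite \<Rightarrow> 'v \<Rightarrow> bool"
    and J1 J2 :: "'v \<Rightarrow> 'v \<Rightarrow> real" and h1 h2 :: "'v \<Rightarrow> real" and b :: real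
  assumes "convex_on {0<..} f"
    and "continuous_on {0<..} f"
    and "\<forall>x>0. f x \<ge> 0"
    and "f 1 = 0"
    and "\<forall>x>0. x \<noteq> 1 \<longrightarrow> f differentiable (at x) \<and> deriv f differentiable (at x)
                         \<and> deriv (deriv f) x \<ge> 0"
    and "\<forall>x. 0 < x \<and> x < 1 \<longrightarrow> deriv f x < 0"
    and "\<forall>x>1. deriv f x > 0"
    and "ising_model E J1 h1" and "ising_model E J2 h2"
    and "b > 0"
    and "marginally_bounded b (gibbs J1 h1)" and "marginally_bounded b (gibbs J2 h2)"
  shows "f_divergence f (gibbs J1 h1) (gibbs J2 h2)
           \<ge> max (f (1 - d_TV (gibbs J1 h1) (gibbs J2 h2))) (f (1 + d_TV (gibbs J1 h1) (gibbs J2 h2)))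
       \<and> max (f (1 - d_TV (gibbs J1 h1) (gibbs J2 h2))) (f (1 + d_TV (gibbs J1 h1) (gibbs J2 h2)))
           \<ge> max (f (1 - b\<^sup>2 / 2 * d_par E J1 h1 J2 h2)) (f (1 + b\<^sup>2 / 2 * d_par E J1 h1 J2 h2))"
proof -
  define \<delta> where "\<delta> = d_TV (gibbs J1 h1) (gibbs J2 h2)"
  define t where "t = b\<^sup>2 / 2 * d_par E J1 h1 J2 h2"
  have "max (f (1 - \<delta>)) (f (1 + \<delta>)) \<le> f_divergence f (gibbs J1 h1) (gibbs J2 h2)"
    unfolding \<delta>_def using assms(1,3,4)
    by (intro f_divergence_ge_f_one_pm_d_TV) (auto simp: gibbs_pos sum_gibbs)
  moreover have "max (f (1 - t)) (f (1 + t)) \<le> max (f (1 - \<delta>)) (f (1 + \<delta>))"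
  proof (rule convex_on_max_one_pm_mono[OF assms(1)])
    show "f 1 \<le> f x" if "0 < x" for x
      using assms(3,4) that by simp
    show "0 \<le> t"
      using d_par_nonneg[of E J1 h1 J2 h2] by (simp add: t_def)
    have "t \<le> b\<^sup>2 / 2 * (\<delta> / b\<^sup>2)"
      unfolding t_def \<delta>_def using d_par_le[OF assms(8-12)] by (intro mult_left_mono) auto
    also have "\<dots> \<le> \<delta>"
      using \<open>b > 0\<close> by (simp add: \<delta>_def d_TV_def sum_nonneg)
    finally show "t \<le> \<delta>" .
    show "\<delta> < 1"
      unfolding \<delta>_def by (intro d_TV_less_one) (auto simp: gibbs_pos sum_gibbs)
  qed
  ultimately show ?thesis
    unfolding \<delta>_def[symmetric] t_def[symmetric] by simp
qed

end
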